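(* Let $\Omega=[0,2\pi]^2$, $s>1$, $u\in H_p^{s+2}(\Omega)$, $N>2$ even, and $u^*=P_{N-2}u$. Then $$\|\Delta_h(\bm u^*-\bm u)\|_h\le CN^{-s}|u|_{s+2},$$ where $\bm u^*,\bm u\in\mathbb V_h$ are the grid values of $u^*,u$ and $C$ is independent of $N$ and $u$.
   Context: $H_p^s(\Omega)$: closure in $H^s(\Omega)$ of smooth $2\pi$-periodic (in $x$ and $y$) functions, with semi-norm $|\cdot|_s$. $S_N=\mathrm{span}\{e^{\mathrm i(j_1x+j_2y)}:|j_1|,|j_2|\le N/2\}$ and $P_N:L^2(\Omega)\to S_N$ the $L^2$-orthogonal projection. Grid: $h=2\pi/N$, $x_j=y_j=jh$, $0\le j\le N-1$; $\mathbb V_h$ the space of doubly periodic grid functions, $\langle\bm U,\bm V\rangle_h=h^2\sum_{j_1,j_2}U_{j_1,j_2}V_{j_1,j_2}$, $\|\bm U\|_h^2=\langle\bm U,\bm U\rangle_h$, $\Delta_hU_{j_1,j_2}=(U_{j_1+1,j_2}+U_{j_1-1,j_2}+U_{j_1,j_2+1}+U_{j_1,j_2-1}-4U_{j_1,j_2})/h^2$ (indices periodic). *)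

theory Defs
  imports "HOL-Analysis.Analysis"
begin

text \<open>Periodic functions on Omega = [0,2pi]^2 are represented by their Fourier
  coefficients c :: int \<times> int \<Rightarrow> complex, u(x,y) = sum_k c k * e^{i(k1 x + k2 y)}.\<close>

definition fourier_fun :: "(int \<times> int \<Rightarrow> complex) \<Rightarrow> real \<Rightarrow> real \<Rightarrow> complex" where
  "fourier_fun c x y =
     (\<Sum>\<^sub>\<infinity>k. c k * exp (\<i> * complex_of_real (real_of_int (fst k) * x + real_of_int (snd k) * y)))"

definition freq_norm2 :: "int \<times> int \<Rightarrow> real" where
  "freq_norm2 k = real_of_int (fst k)^2 + real_of_int (snd k)^2"

definition in_Hp :: "real \<Rightarrow> (int \<times> int \<Rightarrow> complex) \<Rightarrow> bool" where
  "in_Hp s c \<longleftrightarrow> (\<lambda>k. (1 + freq_norm2 k) powr s * (cmod (c k))^2) summable_on UNIV"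

text \<open>The H^s semi-norm |u|_s (L^2 norm of the s-th derivatives, in Fourier form).\<close>
definition Hp_semi :: "real \<Rightarrow> (int \<times> int \<Rightarrow> complex) \<Rightarrow> real" where
  "Hp_semi s c = sqrt (4 * pi^2 * (\<Sum>\<^sub>\<infinity>k. (freq_norm2 k) powr s * (cmod (c k))^2))"

text \<open>L^2-orthogonal projection P_N onto S_N = span{e^{i(j1 x+j2 y)} : |j1|,|j2| \<le> N/2}.\<close>
definition proj_N :: "nat \<Rightarrow> (int \<times> int \<Rightarrow> complex) \<Rightarrow> (int \<times> int \<Rightarrow> complex)" where
  "proj_N N c = (\<lambda>k. if real_of_int \<bar>fst k\<bar> \<le> real N / 2 \<and> real_of_int \<bar>snd k\<bar> \<le> real N / 2
                      then c k else 0)"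

definition mesh :: "nat \<Rightarrow> real" where
  "mesh N = 2 * pi / real N"

definition grid_vals :: "nat \<Rightarrow> (real \<Rightarrow> real \<Rightarrow> complex) \<Rightarrow> nat \<Rightarrow> nat \<Rightarrow> complex" where
  "grid_vals N u j1 j2 = u (real j1 * mesh N) (real j2 * mesh N)"

definition lap_h :: "nat \<Rightarrow> (nat \<Rightarrow> nat \<Rightarrow> complex) \<Rightarrow> nat \<Rightarrow> nat \<Rightarrow> complex" where
  "lap_h N U j1 j2 =
     (U ((j1 + 1) mod N) j2 + U ((j1 + N - 1) mod N) j2
      + U j1 ((j2 + 1) mod N) + U j1 ((j2 + N - 1) mod N) - 4 * U j1 j2)
     / complex_of_real ((mesh N)^2)"

definition norm_h :: "nat \<Rightarrow> (nat \<Rightarrow> nat \<Rightarrow> complex) \<Rightarrow> real" where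
  "norm_h N U = sqrt ((mesh N)^2 * (\<Sum>j1<N. \<Sum>j2<N. (cmod (U j1 j2))^2))"

end

theory Submission
  imports Defs
begin

text \<open>
  Write u* - u as the Fourier series with coefficients d = P c - c, which vanish on the box
  of P_{N-2}, so only frequencies with N \<le> 2 max(|k1|, |k2|) remain. On the grid every mode
  is an eigenvector of the five-point Laplacian with eigenvalue of size at most 8/h^2, and two
  modes are orthogonal on the grid unless their frequencies are congruent modulo N, in which
  case they alias to the same grid function. The Schur test with weights |k|^(2a), a = s + 2,
  reduces the grid norm to sums of |k|^(-2a) over an aliasing class; writing k = r + N m with a
  centred residue r, such a sum is at most a constant times (N/2)^(-2a), by comparison with
  the summable weight 1/((1 + |m1|)^2 (1 + |m2|)^2). Collecting powers of N and h gives the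
  bound for finite Fourier sums, and the series case follows by passing to the limit of
  partial sums.
\<close>

definition decay :: "int \<Rightarrow> real" where
  "decay n = 1 / (1 + real_of_int \<bar>n\<bar>)^2"

lemma decay_nonneg: "decay n \<ge> 0"
  by (simp add: decay_def)

lemma sum_decay_symmetric_interval_le: "(\<Sum>n = -int M..int M. decay n) \<le> 3 - 2 / (real M + 1)"
proof (induction M)
  case 0
  then show ?case by (simp add: decay_def)
next
  case (Suc M)
  have "{-int (Suc M)..int (Suc M)} = insert (int M + 1) (insert (-(int M + 1)) {-int M..int M})"
    by auto
  then have "(\<Sum>n = -int (Suc M)..int (Suc M). decay n)
      = 2 / (real M + 2)^2 + (\<Sum>n = -int M..int M. decay n)"
    by (simp add: decay_def add.commute)
  moreover have "1 / (real M + 2)^2 \<le> 1 / (real M + 1) - 1 / (real M + 2)"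
  proof -
    have "1 / (real M + 2)^2 \<le> 1 / ((real M + 1) * (real M + 2))"
      by (rule divide_left_mono) (auto simp: power2_eq_square)
    also have "\<dots> = 1 / (real M + 1) - 1 / (real M + 2)"
      by (simp add: field_simps)
    finally show ?thesis .
  qed
  moreover have "2 / (real M + 2)^2 = 2 * (1 / (real M + 2)^2)"
    and "2 / (real (Suc M) + 1) = 2 * (1 / (real M + 2))"
    and "2 / (real M + 1) = 2 * (1 / (real M + 1))"
    by simp_all
  ultimately show ?case
    using Suc by linarith
qed

lemma sum_decay_le:
  assumes "finite A"
  shows "(\<Sum>n\<in>A. decay n) \<le> 3"
proof -
  define M where "M = nat (Max (insert 0 (abs ` A)))"
  have "A \<subseteq> {-int M..int M}"
  proof
    fix n
    assume "n \<in> A"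
    then have "\<bar>n\<bar> \<le> Max (insert 0 (abs ` A))"
      using assms by (intro Max_ge) auto
    then show "n \<in> {-int M..int M}"
      unfolding M_def by auto
  qed
  then have "(\<Sum>n\<in>A. decay n) \<le> (\<Sum>n = -int M..int M. decay n)"
    by (intro sum_mono2) (auto simp: decay_nonneg)
  also have "\<dots> \<le> 3 - 2 / (real M + 1)"
    by (rule sum_decay_symmetric_interval_le)
  also have "\<dots> \<le> 3"
    by simp
  finally show ?thesis .
qed

lemma sum_decay_times_decay_le:
  assumes "finite B"
  shows "(\<Sum>m\<in>B. decay (fst m) * decay (snd m)) \<le> 9"
proof -
  have "(\<Sum>m\<in>B. decay (fst m) * decay (snd m)) \<le> (\<Sum>m\<in>fst ` B \<times> snd ` B. decay (fst m) * decay (snd m))"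
    by (rule sum_mono2) (use assms in \<open>force simp: decay_nonneg\<close>)+
  also have "\<dots> = (\<Sum>a\<in>fst ` B. decay a) * (\<Sum>b\<in>snd ` B. decay b)"
    by (simp add: sum_product sum.cartesian_product case_prod_unfold)
  also have "\<dots> \<le> 3 * 3"
    by (intro mult_mono sum_decay_le sum_nonneg decay_nonneg) (use assms in auto)
  finally show ?thesis by simp
qed

lemma decay_ge_of_alias:
  fixes x r m M :: int
  assumes x: "x = r + int N * m" and r: "2 * \<bar>r\<bar> \<le> int N"
    and M: "\<bar>x\<bar> \<le> M" "int N \<le> 2 * M"
  shows "(real N / (4 * real_of_int M))^2 \<le> decay m"
proof (cases "M = 0")
  case False
  have "int N * \<bar>m\<bar> = \<bar>x - r\<bar>"
    using x by (simp add: abs_mult)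
  then have "int N * (1 + \<bar>m\<bar>) \<le> 4 * M"
    using r M by (simp add: distrib_left)
  then have "real_of_int (int N * (1 + \<bar>m\<bar>)) \<le> real_of_int (4 * M)"
    by (simp only: of_int_le_iff)
  moreover have "0 < 1 + \<bar>real_of_int m\<bar>"
    by (simp add: add_pos_nonneg)
  ultimately have "real N / (4 * real_of_int M) \<le> 1 / (1 + real_of_int \<bar>m\<bar>)"
    using False M by (simp add: divide_simps mult.commute)
  moreover have "0 \<le> M"
    using M(1) by (rule order_trans[OF abs_ge_zero])
  ultimately show ?thesis
    unfolding decay_def power_one_over[symmetric] by (intro power_mono) simp_all
qed (simp add: decay_nonneg)

lemma inverse_freq_norm2_powr_le:
  fixes a :: real
  assumes "a \<ge> 0" "k \<noteq> 0"
  shows "1 / freq_norm2 k powr a \<le> 1 / real_of_int (max \<bar>fst k\<bar> \<bar>snd k\<bar>) powr (2 * a)"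
proof -
  define M where "M = real_of_int (max \<bar>fst k\<bar> \<bar>snd k\<bar>)"
  have M_pos: "M > 0"
    using assms(2) unfolding M_def by (cases k) (auto simp: zero_prod_def)
  have "M ^ 2 \<le> freq_norm2 k"
    unfolding freq_norm2_def M_def by (auto simp: max_def)
  then have "(M ^ 2) powr a \<le> freq_norm2 k powr a"
    using assms(1) M_pos by (intro powr_mono2) auto
  then have "(M powr 2) powr a \<le> freq_norm2 k powr a"
    using M_pos by (simp add: powr_numeral)
  then have M_powr_le: "M powr (2 * a) \<le> freq_norm2 k powr a"
    by (simp add: powr_powr mult.commute)
  have M_powr_pos: "0 < M powr (2 * a)"
    using M_pos by simp
  show ?thesis
    unfolding M_def[symmetric] using M_powr_pos order_less_le_trans[OF M_powr_pos M_powr_le]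
    by (intro divide_left_mono M_powr_le mult_pos_pos) auto
qed

definition alias_freq :: "nat \<Rightarrow> int \<times> int \<Rightarrow> int \<times> int \<Rightarrow> int \<times> int" where
  "alias_freq N r m = (fst r + int N * fst m, snd r + int N * snd m)"

lemma inverse_freq_norm2_powr_alias_le:
  fixes a :: real and r m :: "int \<times> int"
  assumes a: "a \<ge> 2" and N: "N > 0"
    and r: "2 * \<bar>fst r\<bar> \<le> int N" "2 * \<bar>snd r\<bar> \<le> int N"
    and far: "int N \<le> 2 * max \<bar>fst (alias_freq N r m)\<bar> \<bar>snd (alias_freq N r m)\<bar>"
  shows "1 / freq_norm2 (alias_freq N r m) powr a
      \<le> 16 * (real N / 2) powr (- 2 * a) * (decay (fst m) * decay (snd m))"
proof -
  define k where "k = alias_freq N r m"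
  define M where "M = max \<bar>fst k\<bar> \<bar>snd k\<bar>"
  define q where "q = (real N / 2) / real_of_int M"
  have M_bounds: "\<bar>fst r + int N * fst m\<bar> \<le> M" "\<bar>snd r + int N * snd m\<bar> \<le> M" "int N \<le> 2 * M"
    using far unfolding M_def k_def alias_freq_def by auto
  then have "real N \<le> 2 * real_of_int M"
    by (metis of_int_le_iff of_int_mult of_int_numeral of_int_of_nat_eq)
  then have M_pos: "real_of_int M > 0" and q: "0 < q" "q \<le> 1"
    using N by (auto simp: q_def divide_simps)
  have "q / 2 = real N / (4 * real_of_int M)"
    by (simp add: q_def)
  then have "(q / 2)^2 \<le> decay (fst m)" "(q / 2)^2 \<le> decay (snd m)"
    using decay_ge_of_alias[OF refl r(1) M_bounds(1,3)] decay_ge_of_alias[OF refl r(2) M_bounds(2,3)]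
    by simp_all
  then have "(q / 2)^2 * (q / 2)^2 \<le> decay (fst m) * decay (snd m)"
    by (intro mult_mono) (auto simp: decay_nonneg)
  then have decay_prod: "q ^ 4 \<le> 16 * (decay (fst m) * decay (snd m))"
    by (simp add: power2_eq_square power4_eq_xxxx)
  have "k \<noteq> 0"
    using M_pos unfolding M_def by auto
  then have "1 / freq_norm2 k powr a \<le> 1 / real_of_int M powr (2 * a)"
    unfolding M_def using a by (intro inverse_freq_norm2_powr_le) auto
  also have "\<dots> = (real N / 2) powr (- 2 * a) * (real N / 2) powr (2 * a) / real_of_int M powr (2 * a)"
    using N by (simp add: powr_add[symmetric])
  also have "\<dots> = (real N / 2) powr (- 2 * a) * q powr (2 * a)"
    using M_pos by (simp add: q_def powr_divide powr_mult)
  also have "\<dots> \<le> (real N / 2) powr (- 2 * a) * q ^ 4"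
  proof -
    have "q powr (2 * a) \<le> q powr 4"
      using a q by (intro powr_mono') auto
    also have "\<dots> = q ^ 4"
      using q by (simp add: powr_numeral)
    finally show ?thesis
      by (intro mult_left_mono) auto
  qed
  also have "\<dots> \<le> 16 * (real N / 2) powr (- 2 * a) * (decay (fst m) * decay (snd m))"
    using mult_left_mono[OF decay_prod, of "(real N / 2) powr (- 2 * a)"] by simp
  finally show ?thesis
    unfolding k_def .
qed

lemma inj_alias_freq: "N > 0 \<Longrightarrow> inj (alias_freq N r)"
  by (rule injI) (auto simp: alias_freq_def prod_eq_iff)

definition freq_cong :: "nat \<Rightarrow> int \<times> int \<Rightarrow> int \<times> int \<Rightarrow> bool" where
  "freq_cong N k k' \<longleftrightarrow> int N dvd fst k - fst k' \<and> int N dvd snd k - snd k'"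

lemma freq_cong_sym: "freq_cong N k k' \<longleftrightarrow> freq_cong N k' k"
  unfolding freq_cong_def by (simp add: dvd_diff_commute)

lemma freq_cong_trans:
  assumes "freq_cong N k k'" "freq_cong N k' k''"
  shows "freq_cong N k k''"
proof -
  have "int N dvd (fst k - fst k') + (fst k' - fst k'')" "int N dvd (snd k - snd k') + (snd k' - snd k'')"
    using assms unfolding freq_cong_def by (blast intro: dvd_add)+
  then show ?thesis
    unfolding freq_cong_def by simp
qed

lemma freq_cong_iff_alias_freq: "freq_cong N r k \<longleftrightarrow> k \<in> range (alias_freq N r)"
proof
  assume "freq_cong N r k"
  then obtain m1 m2 where "fst k - fst r = int N * m1" "snd k - snd r = int N * m2"
    unfolding freq_cong_def by (metis dvd_diff_commute dvdE)
  then have "k = alias_freq N r (m1, m2)"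
    unfolding alias_freq_def by (simp add: prod_eq_iff algebra_simps)
  then show "k \<in> range (alias_freq N r)"
    by blast
qed (auto simp: freq_cong_def alias_freq_def)

lemma exists_centered_residue:
  assumes "N > 0"
  shows "\<exists>r. 2 * \<bar>r\<bar> \<le> int N \<and> int N dvd x - r"
proof
  define h where "h = int N div 2"
  have "0 \<le> (x + h) mod int N" "(x + h) mod int N < int N"
    using assms by auto
  moreover have "int N \<le> 2 * h + 1" "2 * h \<le> int N"
    unfolding h_def by linarith+
  ultimately have "2 * \<bar>(x + h) mod int N - h\<bar> \<le> int N"
    by (auto simp: abs_if)
  moreover have "x - ((x + h) mod int N - h) = int N * ((x + h) div int N)"
    by (simp add: minus_mod_eq_mult_div[symmetric])
  ultimately show "2 * \<bar>(x + h) mod int N - h\<bar> \<le> int N \<and> int N dvd x - ((x + h) mod int N - h)"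
    by simp
qed

lemma sum_inverse_freq_norm2_powr_cong_le:
  fixes a :: real
  assumes a: "a \<ge> 2" and N: "N > 0" and G: "finite G"
    and far: "\<And>k'. k' \<in> G \<Longrightarrow> int N \<le> 2 * max \<bar>fst k'\<bar> \<bar>snd k'\<bar>"
  shows "(\<Sum>k'\<in>{k'\<in>G. freq_cong N k k'}. 1 / freq_norm2 k' powr a) \<le> 144 * (real N / 2) powr (- 2 * a)"
proof -
  obtain r1 r2 where r: "2 * \<bar>r1\<bar> \<le> int N" "2 * \<bar>r2\<bar> \<le> int N"
    and r_cong: "int N dvd fst k - r1" "int N dvd snd k - r2"
    using exists_centered_residue[OF N] by meson
  define r where "r = (r1, r2)"
  define B where "B = alias_freq N r -` G"
  have "freq_cong N k r"
    using r_cong unfolding r_def freq_cong_def by simp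
  then have "freq_cong N k k' \<longleftrightarrow> k' \<in> range (alias_freq N r)" for k'
    using freq_cong_trans freq_cong_sym freq_cong_iff_alias_freq by metis
  then have "{k'\<in>G. freq_cong N k k'} = alias_freq N r ` B"
    unfolding B_def by auto
  moreover have "finite B"
    unfolding B_def using G inj_alias_freq[OF N] by (rule finite_vimageI)
  moreover have "1 / freq_norm2 (alias_freq N r m) powr a \<le> 16 * (real N / 2) powr (- 2 * a) * (decay (fst m) * decay (snd m))"
    if "m \<in> B" for m
    using that r far unfolding B_def r_def by (intro inverse_freq_norm2_powr_alias_le[OF a N]) auto
  ultimately have "(\<Sum>k'\<in>{k'\<in>G. freq_cong N k k'}. 1 / freq_norm2 k' powr a)
      \<le> 16 * (real N / 2) powr (- 2 * a) * (\<Sum>m\<in>B. decay (fst m) * decay (snd m))"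
    by (simp add: sum.reindex inj_on_subset[OF inj_alias_freq[OF N]] sum_distrib_left sum_mono)
  also have "\<dots> \<le> 16 * (real N / 2) powr (- 2 * a) * 9"
    using \<open>finite B\<close> by (intro mult_left_mono sum_decay_times_decay_le) auto
  finally show ?thesis
    by simp
qed

definition grid_mode :: "nat \<Rightarrow> int \<Rightarrow> nat \<Rightarrow> complex" where
  "grid_mode N z j = exp (\<i> * complex_of_real (real_of_int z * (real j * mesh N)))"

lemma grid_mode_add: "grid_mode N z (m + n) = grid_mode N z m * grid_mode N z n"
  unfolding grid_mode_def by (simp add: distrib_left distrib_right exp_add[symmetric])

lemma grid_mode_power: "grid_mode N z j = grid_mode N z 1 ^ j"
  unfolding grid_mode_def by (simp add: exp_of_nat_mult[symmetric] mult_ac)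

lemma grid_mode_cnj: "cnj (grid_mode N z j) = grid_mode N (- z) j"
  unfolding grid_mode_def by (simp add: exp_cnj)

lemma grid_mode_mult: "grid_mode N z j * grid_mode N z' j = grid_mode N (z + z') j"
  unfolding grid_mode_def by (simp add: exp_add[symmetric] distrib_left distrib_right)

lemma norm_grid_mode [simp]: "norm (grid_mode N z j) = 1"
  unfolding grid_mode_def by simp

lemma grid_mode_multiple: "N > 0 \<Longrightarrow> grid_mode N z (N * q) = 1"
proof -
  assume "N > 0"
  then have "real_of_int z * (real (N * q) * mesh N) = 2 * pi * real_of_int (z * int q)"
    by (simp add: mesh_def field_simps)
  then show ?thesis
    unfolding grid_mode_def exp_eq_1 by (auto intro!: exI[of _ "z * int q"])
qed

lemma grid_mode_mod: "N > 0 \<Longrightarrow> grid_mode N z (j mod N) = grid_mode N z j"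
  by (metis grid_mode_add grid_mode_multiple mult.right_neutral mod_mult_div_eq)

lemma grid_mode_one_eq_1_iff:
  assumes "N > 0"
  shows "grid_mode N z 1 = 1 \<longleftrightarrow> int N dvd z"
proof
  assume "int N dvd z"
  then obtain q where "z = int N * q" ..
  then have "real_of_int z * (real 1 * mesh N) = 2 * pi * real_of_int q"
    using assms by (simp add: mesh_def field_simps)
  then show "grid_mode N z 1 = 1"
    unfolding grid_mode_def exp_eq_1 by (auto intro!: exI[of _ q])
next
  assume "grid_mode N z 1 = 1"
  then obtain n :: int where "real_of_int z * (2 * pi / real N) = of_int (2 * n) * pi"
    unfolding grid_mode_def exp_eq_1 by (auto simp: mesh_def)
  then have "real_of_int z = real_of_int (n * int N)"
    using assms by (simp add: field_simps)
  then show "int N dvd z"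
    by (simp only: of_int_eq_iff) simp
qed

lemma sum_grid_mode_mult_cnj:
  assumes "N > 0"
  shows "(\<Sum>j<N. grid_mode N z j * cnj (grid_mode N z' j)) = (if int N dvd z - z' then of_nat N else 0)"
proof -
  define \<omega> where "\<omega> = grid_mode N (z - z') 1"
  have terms: "grid_mode N z j * cnj (grid_mode N z' j) = \<omega> ^ j" for j
    using grid_mode_power[of N "z - z'" j] by (simp add: \<omega>_def grid_mode_cnj grid_mode_mult)
  show ?thesis
  proof (cases "int N dvd z - z'")
    case True
    then have "\<omega> = 1"
      unfolding \<omega>_def using grid_mode_one_eq_1_iff[OF assms] by simp
    then show ?thesis
      unfolding terms using True by simp
  next
    case False
    then have "\<omega> \<noteq> 1"
      unfolding \<omega>_def using grid_mode_one_eq_1_iff[OF assms] by simp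
    moreover have "\<omega> ^ N = 1"
      using grid_mode_multiple[OF assms, of "z - z'" 1] grid_mode_power[of N "z - z'" N]
      by (simp add: \<omega>_def)
    ultimately show ?thesis
      unfolding terms using False by (simp add: geometric_sum)
  qed
qed

definition grid_wave :: "nat \<Rightarrow> int \<times> int \<Rightarrow> nat \<Rightarrow> nat \<Rightarrow> complex" where
  "grid_wave N k j1 j2 = grid_mode N (fst k) j1 * grid_mode N (snd k) j2"

lemma grid_vals_fourier_fun:
  "grid_vals N (fourier_fun c) j1 j2 = (\<Sum>\<^sub>\<infinity>k. c k * grid_wave N k j1 j2)"
  unfolding grid_vals_def fourier_fun_def grid_wave_def grid_mode_def
  by (simp add: exp_add[symmetric] distrib_left)

definition lap_symbol :: "nat \<Rightarrow> int \<times> int \<Rightarrow> complex" where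
  "lap_symbol N k =
     (grid_mode N (fst k) 1 + grid_mode N (fst k) (N - 1) + grid_mode N (snd k) 1
      + grid_mode N (snd k) (N - 1) - 4) / complex_of_real ((mesh N)^2)"

lemma norm_lap_symbol_le: "norm (lap_symbol N k) \<le> 8 / (mesh N)^2"
proof -
  have "norm (grid_mode N (fst k) 1 + grid_mode N (fst k) (N - 1) + grid_mode N (snd k) 1
      + grid_mode N (snd k) (N - 1) - 4) \<le> 1 + 1 + 1 + 1 + 4"
    by (intro order_trans[OF norm_triangle_ineq4] add_mono order_trans[OF norm_triangle_ineq]) simp_all
  moreover have "norm (complex_of_real ((mesh N)^2)) = (mesh N)^2"
    by (simp only: norm_of_real) simp
  ultimately show ?thesis
    unfolding lap_symbol_def norm_divide by (simp add: divide_right_mono)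
qed

lemma lap_h_sum_grid_wave:
  assumes N: "N > 0"
  shows "lap_h N (\<lambda>j1 j2. \<Sum>k\<in>F. d k * grid_wave N k j1 j2) j1 j2
       = (\<Sum>k\<in>F. d k * lap_symbol N k * grid_wave N k j1 j2)"
proof -
  have succ: "grid_mode N z ((j + 1) mod N) = grid_mode N z j * grid_mode N z 1" for z j
    using grid_mode_mod[OF N] grid_mode_add by metis
  have pred: "grid_mode N z ((j + N - 1) mod N) = grid_mode N z j * grid_mode N z (N - 1)" for z j
    using N by (simp add: grid_mode_mod[OF N] grid_mode_add[symmetric])
  show ?thesis
    unfolding lap_h_def grid_wave_def succ pred lap_symbol_def
    by (simp add: sum_divide_distrib sum_subtractf[symmetric] sum.distrib[symmetric]
        sum_distrib_left algebra_simps)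
qed

lemma sum_grid_norm_sum_grid_wave_sq_le:
  assumes N: "N > 0"
  shows "(\<Sum>j1<N. \<Sum>j2<N. (cmod (\<Sum>k\<in>F. b k * grid_wave N k j1 j2))^2)
     \<le> real N ^ 2 * (\<Sum>k\<in>F. \<Sum>k'\<in>F. if freq_cong N k k' then cmod (b k) * cmod (b k') else 0)"
proof -
  define S where "S j1 j2 = (\<Sum>k\<in>F. b k * grid_wave N k j1 j2)" for j1 j2
  have gram: "(\<Sum>j1<N. \<Sum>j2<N. grid_wave N k j1 j2 * cnj (grid_wave N k' j1 j2))
      = (if freq_cong N k k' then of_nat N ^ 2 else 0)" for k k'
  proof -
    have "(\<Sum>j1<N. \<Sum>j2<N. grid_wave N k j1 j2 * cnj (grid_wave N k' j1 j2))
        = (\<Sum>j1<N. grid_mode N (fst k) j1 * cnj (grid_mode N (fst k') j1))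
          * (\<Sum>j2<N. grid_mode N (snd k) j2 * cnj (grid_mode N (snd k') j2))"
      unfolding grid_wave_def sum_product by (simp add: mult_ac)
    then show ?thesis
      unfolding sum_grid_mode_mult_cnj[OF N] freq_cong_def by (simp add: power2_eq_square)
  qed
  have "complex_of_real (\<Sum>j1<N. \<Sum>j2<N. (cmod (S j1 j2))^2)
      = (\<Sum>j1<N. \<Sum>j2<N. \<Sum>k\<in>F. \<Sum>k'\<in>F. b k * cnj (b k') * (grid_wave N k j1 j2 * cnj (grid_wave N k' j1 j2)))"
    unfolding S_def of_real_sum complex_norm_square cnj_sum sum_product
    by (intro sum.cong refl) (simp add: mult_ac)
  also have "\<dots> = (\<Sum>k\<in>F. \<Sum>k'\<in>F. b k * cnj (b k') * (if freq_cong N k k' then of_nat N ^ 2 else 0))"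
    unfolding gram[symmetric] sum_distrib_left
    by (subst sum.swap, subst (2) sum.swap, rule sum.cong[OF refl], subst sum.swap, subst (2) sum.swap) (rule refl)
  finally have parseval: "complex_of_real (\<Sum>j1<N. \<Sum>j2<N. (cmod (S j1 j2))^2) = \<dots>" .
  have "(\<Sum>j1<N. \<Sum>j2<N. (cmod (S j1 j2))^2) = norm (complex_of_real (\<Sum>j1<N. \<Sum>j2<N. (cmod (S j1 j2))^2))"
    by (simp only: norm_of_real) (simp add: sum_nonneg)
  also have "\<dots> \<le> (\<Sum>k\<in>F. \<Sum>k'\<in>F. norm (b k * cnj (b k') * (if freq_cong N k k' then of_nat N ^ 2 else 0)))"
    unfolding parseval by (intro order_trans[OF norm_sum] sum_mono order_trans[OF norm_sum] order_refl)
  also have "\<dots> = real N ^ 2 * (\<Sum>k\<in>F. \<Sum>k'\<in>F. if freq_cong N k k' then cmod (b k) * cmod (b k') else 0)"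
    unfolding sum_distrib_left by (intro sum.cong refl) (simp add: norm_mult norm_power)
  finally show ?thesis
    unfolding S_def .
qed

lemma schur_test_sum_le:
  fixes x W :: "'a \<Rightarrow> real"
  assumes W: "\<And>k. k \<in> F \<Longrightarrow> W k > 0" and sym: "\<And>k k'. R k k' \<longleftrightarrow> R k' k"
  shows "(\<Sum>k\<in>F. \<Sum>k'\<in>F. if R k k' then x k * x k' else 0)
      \<le> (\<Sum>k\<in>F. x k ^ 2 * W k * (\<Sum>k'\<in>F. if R k k' then 1 / W k' else 0))"
proof -
  define T where "T k k' = (if R k k' then x k ^ 2 * W k / W k' else 0)" for k k'
  have "(if R k k' then x k * x k' else 0) \<le> (T k k' + T k' k) / 2" if "k \<in> F" "k' \<in> F" for k k'
  proof (cases "R k k'")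
    case True
    have "0 \<le> (x k * W k - x k' * W k')^2"
      by simp
    then have "2 * (x k * x k') * (W k * W k') \<le> x k ^ 2 * W k * W k + x k' ^ 2 * W k' * W k'"
      by (simp add: power2_eq_square algebra_simps)
    then show ?thesis
      using True sym W[OF that(1)] W[OF that(2)] by (simp add: T_def field_simps power2_eq_square)
  qed (use sym in \<open>simp add: T_def\<close>)
  then have "(\<Sum>k\<in>F. \<Sum>k'\<in>F. if R k k' then x k * x k' else 0)
      \<le> (\<Sum>k\<in>F. \<Sum>k'\<in>F. (T k k' + T k' k) / 2)"
    by (intro sum_mono) auto
  also have "\<dots> = (\<Sum>k\<in>F. \<Sum>k'\<in>F. T k k') / 2 + (\<Sum>k\<in>F. \<Sum>k'\<in>F. T k' k) / 2"
    by (simp add: add_divide_distrib sum.distrib flip: sum_divide_distrib)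
  also have "\<dots> = (\<Sum>k\<in>F. \<Sum>k'\<in>F. T k k')"
    by (subst (2) sum.swap) simp
  also have "\<dots> = (\<Sum>k\<in>F. x k ^ 2 * W k * (\<Sum>k'\<in>F. if R k k' then 1 / W k' else 0))"
    unfolding sum_distrib_left T_def by (intro sum.cong refl) simp
  finally show ?thesis .
qed

lemma grid_constant_eq:
  assumes "N > 0"
  shows "(mesh N)^2 * (real N ^ 2 * (64 * 144) / (mesh N)^4 * (real N / 2) powr (- 2 * a))
       = (24 / pi^2 * 2 powr a * real N powr (2 - a))^2 * (4 * pi^2)"
proof -
  define n where "n = real N"
  have n: "n > 0"
    using assms by (simp add: n_def)
  have "(n / 2) powr (- 2 * a) = 2 powr (2 * a) / n powr (2 * a)"
    using n by (simp add: powr_minus_divide powr_divide)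
  moreover have "(2 powr a)^2 = 2 powr (2 * a)"
    by (simp add: power2_eq_square powr_add[symmetric])
  moreover have "(n powr (2 - a))^2 = n ^ 4 / n powr (2 * a)"
  proof -
    have "(n powr (2 - a))^2 = n powr (4 - 2 * a)"
      by (simp add: power2_eq_square powr_add[symmetric])
    also have "\<dots> = n ^ 4 / n powr (2 * a)"
      using n by (simp add: powr_diff powr_numeral)
    finally show ?thesis .
  qed
  ultimately have scaling: "(n / 2) powr (- 2 * a) = (2 powr a * n powr (2 - a))^2 / n ^ 4"
    using n by (simp add: power_mult_distrib)
  have "(2 * pi / n)^2 * (n^2 * (64 * 144) / (2 * pi / n)^4 * (Z / n^4)) = (24 / pi^2)^2 * Z * (4 * pi^2)" for Z
    using n by (simp add: field_simps power2_eq_square power4_eq_xxxx)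
  from this[of "(2 powr a * n powr (2 - a))^2"] show ?thesis
    unfolding mesh_def n_def[symmetric] scaling by (simp only: power_mult_distrib mult_ac)
qed

lemma sum_grid_norm_lap_grid_wave_sum_sq_le:
  fixes a :: real
  assumes a: "a \<ge> 2" and N: "N > 0" and F: "finite F"
    and far: "\<And>k. k \<in> F \<Longrightarrow> int N \<le> 2 * max \<bar>fst k\<bar> \<bar>snd k\<bar>"
  shows "(\<Sum>j1<N. \<Sum>j2<N. (cmod (lap_h N (\<lambda>j1 j2. \<Sum>k\<in>F. d k * grid_wave N k j1 j2) j1 j2))^2)
     \<le> (real N ^ 2 * (64 * 144) / (mesh N)^4 * (real N / 2) powr (- 2 * a))
        * (\<Sum>k\<in>F. freq_norm2 k powr a * (cmod (d k))^2)"
proof -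
  define W where "W k = freq_norm2 k powr a" for k
  define x where "x k = cmod (d k * lap_symbol N k)" for k
  define K where "K = 144 * (real N / 2) powr (- 2 * a)"
  have W_pos: "W k > 0" if "k \<in> F" for k
  proof -
    have "fst k \<noteq> 0 \<or> snd k \<noteq> 0"
      using far[OF that] N by auto
    then show ?thesis
      unfolding W_def freq_norm2_def by (auto simp: add_pos_nonneg add_nonneg_pos)
  qed
  have x_sq: "x k ^ 2 \<le> 64 / (mesh N)^4 * (cmod (d k))^2" for k
  proof -
    have "x k \<le> cmod (d k) * (8 / (mesh N)^2)"
      unfolding x_def norm_mult by (rule mult_left_mono[OF norm_lap_symbol_le]) simp
    then have "x k ^ 2 \<le> (cmod (d k) * (8 / (mesh N)^2))^2"
      by (rule power_mono) (simp add: x_def)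
    then show ?thesis
      by (simp add: power_mult_distrib power_divide mult.commute)
  qed
  have class_sum: "(\<Sum>k'\<in>F. if freq_cong N k k' then 1 / W k' else 0) \<le> K" for k
    unfolding W_def K_def using sum_inverse_freq_norm2_powr_cong_le[OF a N F far, of k] F
    by (simp add: sum.inter_filter)
  have "(\<Sum>j1<N. \<Sum>j2<N. (cmod (lap_h N (\<lambda>j1 j2. \<Sum>k\<in>F. d k * grid_wave N k j1 j2) j1 j2))^2)
      \<le> real N ^ 2 * (\<Sum>k\<in>F. \<Sum>k'\<in>F. if freq_cong N k k' then x k * x k' else 0)"
    unfolding lap_h_sum_grid_wave[OF N] x_def
    by (rule sum_grid_norm_sum_grid_wave_sq_le[OF N])
  also have "\<dots> \<le> real N ^ 2 * (\<Sum>k\<in>F. x k ^ 2 * W k * (\<Sum>k'\<in>F. if freq_cong N k k' then 1 / W k' else 0))"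
    using W_pos freq_cong_sym by (intro mult_left_mono schur_test_sum_le) auto
  also have "\<dots> \<le> real N ^ 2 * (\<Sum>k\<in>F. 64 / (mesh N)^4 * (cmod (d k))^2 * W k * K)"
    using W_pos by (intro mult_left_mono sum_mono mult_mono x_sq class_sum)
      (auto simp: less_imp_le sum_nonneg)
  also have "\<dots> = (real N ^ 2 * (64 * 144) / (mesh N)^4 * (real N / 2) powr (- 2 * a))
      * (\<Sum>k\<in>F. freq_norm2 k powr a * (cmod (d k))^2)"
    unfolding sum_distrib_left K_def W_def by (intro sum.cong refl) (simp add: mult_ac)
  finally show ?thesis .
qed

lemma norm_h_lap_grid_wave_sum_sq_le:
  fixes a :: real
  assumes a: "a \<ge> 2" and N: "N > 0" and F: "finite F"
    and far: "\<And>k. k \<in> F \<Longrightarrow> int N \<le> 2 * max \<bar>fst k\<bar> \<bar>snd k\<bar>"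
  shows "(norm_h N (lap_h N (\<lambda>j1 j2. \<Sum>k\<in>F. d k * grid_wave N k j1 j2)))^2
     \<le> (24 / pi^2 * 2 powr a * real N powr (2 - a))^2
        * (4 * pi^2 * (\<Sum>k\<in>F. freq_norm2 k powr a * (cmod (d k))^2))"
proof -
  have "(norm_h N (lap_h N (\<lambda>j1 j2. \<Sum>k\<in>F. d k * grid_wave N k j1 j2)))^2
      = (mesh N)^2 * (\<Sum>j1<N. \<Sum>j2<N. (cmod (lap_h N (\<lambda>j1 j2. \<Sum>k\<in>F. d k * grid_wave N k j1 j2) j1 j2))^2)"
    unfolding norm_h_def by (simp add: sum_nonneg)
  also have "\<dots> \<le> (mesh N)^2 * ((real N ^ 2 * (64 * 144) / (mesh N)^4 * (real N / 2) powr (- 2 * a))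
      * (\<Sum>k\<in>F. freq_norm2 k powr a * (cmod (d k))^2))"
    by (rule mult_left_mono[OF sum_grid_norm_lap_grid_wave_sum_sq_le[OF a N F far] zero_le_power2])
  also have "\<dots> = (24 / pi^2 * 2 powr a * real N powr (2 - a))^2
        * (4 * pi^2 * (\<Sum>k\<in>F. freq_norm2 k powr a * (cmod (d k))^2))"
    by (subst mult.assoc[symmetric], subst grid_constant_eq[OF N]) (rule mult.assoc)
  finally show ?thesis .
qed

lemma one_plus_abs_sq_le: "(1 + \<bar>t\<bar>)^2 \<le> 2 * (1 + t^2)" for t :: real
proof -
  have "0 \<le> (\<bar>t\<bar> - 1)^2"
    by simp
  then show ?thesis
    by (simp add: power2_eq_square algebra_simps)
qed

lemma one_plus_freq_norm2_powr_le_decay: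
  fixes a :: real
  assumes "a \<ge> 2"
  shows "(1 + freq_norm2 k) powr (- a) \<le> 4 * (decay (fst k) * decay (snd k))"
proof -
  define x where "x = real_of_int (fst k)"
  define y where "y = real_of_int (snd k)"
  have freq: "freq_norm2 k = x^2 + y^2"
    unfolding freq_norm2_def x_def y_def by simp
  have "0 \<le> x^2" "0 \<le> y^2"
    by simp_all
  then have pos: "0 < 1 + x^2 + y^2" "0 < 1 + x^2" "0 < 1 + y^2"
    by linarith+
  have "(1 + freq_norm2 k) powr (- a) \<le> (1 + freq_norm2 k) powr (- 2)"
    using assms by (intro powr_mono) (auto simp: freq)
  also have "\<dots> = 1 / (1 + x^2 + y^2)^2"
    unfolding freq by (simp add: powr_minus powr_numeral divide_inverse add.assoc)
  also have "\<dots> \<le> 1 / ((1 + x^2) * (1 + y^2))"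
  proof (rule divide_left_mono)
    have "(1 + x^2 + y^2)^2 - (1 + x^2) * (1 + y^2) = x^2 + y^2 + x^2 * x^2 + x^2 * y^2 + y^2 * y^2"
      by (simp add: power2_eq_square algebra_simps)
    then show "(1 + x^2) * (1 + y^2) \<le> (1 + x^2 + y^2)^2"
      by (smt (verit) zero_le_power2 mult_nonneg_nonneg)
  qed (use pos in auto)
  also have "\<dots> \<le> 1 / ((1 + \<bar>x\<bar>)^2 / 2 * ((1 + \<bar>y\<bar>)^2 / 2))"
    using one_plus_abs_sq_le[of x] one_plus_abs_sq_le[of y]
    by (intro divide_left_mono mult_mono) (use pos in auto)
  also have "\<dots> = 4 * (decay (fst k) * decay (snd k))"
    unfolding decay_def x_def y_def by (simp add: field_simps)
  finally show ?thesis .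
qed

lemma summable_on_decay_times_decay: "(\<lambda>k. decay (fst k) * decay (snd k)) summable_on UNIV"
proof (rule nonneg_bdd_above_summable_on)
  show "bdd_above (sum (\<lambda>k. decay (fst k) * decay (snd k)) ` {F. F \<subseteq> UNIV \<and> finite F})"
    using sum_decay_times_decay_le by (intro bdd_aboveI2[where M = 9]) auto
qed (simp add: decay_nonneg)

lemma summable_on_one_plus_freq_norm2_powr:
  fixes a :: real
  assumes "a \<ge> 2"
  shows "(\<lambda>k. (1 + freq_norm2 k) powr (- a)) summable_on UNIV"
proof (rule summable_on_comparison_test)
  show "(\<lambda>k. 4 * (decay (fst k) * decay (snd k))) summable_on UNIV"
    by (rule summable_on_cmult_right[OF summable_on_decay_times_decay])
  show "(1 + freq_norm2 k) powr (- a) \<le> 4 * (decay (fst k) * decay (snd k))" for k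
    by (rule one_plus_freq_norm2_powr_le_decay[OF assms])
qed simp

lemma in_Hp_abs_summable:
  assumes "in_Hp a c" "a \<ge> 2"
  shows "(\<lambda>k. cmod (c k)) summable_on UNIV"
proof (rule summable_on_comparison_test)
  define w where "w k = (1 + freq_norm2 k) powr a" for k
  have w_pos: "w k > 0" for k
  proof -
    have "0 \<le> freq_norm2 k"
      unfolding freq_norm2_def by simp
    then show ?thesis
      unfolding w_def by simp
  qed
  have "(\<lambda>k. w k * (cmod (c k))^2 + 1 / w k) summable_on UNIV"
    unfolding w_def powr_minus_divide[symmetric]
    using assms(1)[unfolded in_Hp_def] summable_on_one_plus_freq_norm2_powr[OF assms(2)]
    by (rule summable_on_add)
  then have "(\<lambda>k. (w k * (cmod (c k))^2 + 1 / w k) * (1 / 2)) summable_on UNIV"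
    by (rule summable_on_cmult_left)
  then show "(\<lambda>k. (w k * (cmod (c k))^2 + 1 / w k) / 2) summable_on UNIV"
    by simp
  show "cmod (c k) \<le> (w k * (cmod (c k))^2 + 1 / w k) / 2" for k
  proof -
    have "0 \<le> (w k * cmod (c k) - 1)^2"
      by simp
    then show ?thesis
      using w_pos[of k] by (simp add: field_simps power2_eq_square)
  qed
qed simp

lemma Hp_semi_nonneg: "0 \<le> Hp_semi a c"
  unfolding Hp_semi_def by (simp add: infsum_nonneg)

lemma sum_freq_norm2_powr_le_Hp_semi:
  assumes "in_Hp a c" "a \<ge> 0" "finite F"
  shows "4 * pi^2 * (\<Sum>k\<in>F. freq_norm2 k powr a * (cmod (c k))^2) \<le> (Hp_semi a c)^2"
proof -
  have "(\<lambda>k. freq_norm2 k powr a * (cmod (c k))^2) summable_on UNIV"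
    using assms(1) unfolding in_Hp_def
    by (rule summable_on_comparison_test) (use assms(2) in \<open>auto intro!: mult_right_mono powr_mono2 simp: freq_norm2_def\<close>)
  then have "(\<Sum>k\<in>F. freq_norm2 k powr a * (cmod (c k))^2) \<le> (\<Sum>\<^sub>\<infinity>k. freq_norm2 k powr a * (cmod (c k))^2)"
    using assms(3) by (rule finite_sum_le_infsum) auto
  moreover have "0 \<le> (\<Sum>\<^sub>\<infinity>k. freq_norm2 k powr a * (cmod (c k))^2)"
    by (rule infsum_nonneg) simp
  ultimately show ?thesis
    unfolding Hp_semi_def by simp
qed

lemma norm_h_lap_grid_wave_sum_le_Hp_semi:
  fixes a :: real
  assumes a: "a \<ge> 2" and N: "N > 0" and c: "in_Hp a c" and F: "finite F"
    and far: "\<And>k. k \<in> F \<Longrightarrow> int N \<le> 2 * max \<bar>fst k\<bar> \<bar>snd k\<bar>"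
    and d: "\<And>k. cmod (d k) \<le> cmod (c k)"
  shows "norm_h N (lap_h N (\<lambda>j1 j2. \<Sum>k\<in>F. d k * grid_wave N k j1 j2))
     \<le> 24 / pi^2 * 2 powr a * real N powr (2 - a) * Hp_semi a c"
proof (rule power2_le_imp_le)
  have "4 * pi^2 * (\<Sum>k\<in>F. freq_norm2 k powr a * (cmod (d k))^2)
      \<le> 4 * pi^2 * (\<Sum>k\<in>F. freq_norm2 k powr a * (cmod (c k))^2)"
    using d by (intro mult_left_mono sum_mono power_mono) auto
  also have "\<dots> \<le> (Hp_semi a c)^2"
    using a by (intro sum_freq_norm2_powr_le_Hp_semi[OF c _ F]) simp
  finally have weighted_sum: "4 * pi^2 * (\<Sum>k\<in>F. freq_norm2 k powr a * (cmod (d k))^2) \<le> (Hp_semi a c)^2" .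
  have "(norm_h N (lap_h N (\<lambda>j1 j2. \<Sum>k\<in>F. d k * grid_wave N k j1 j2)))^2
      \<le> (24 / pi^2 * 2 powr a * real N powr (2 - a))^2 * (4 * pi^2 * (\<Sum>k\<in>F. freq_norm2 k powr a * (cmod (d k))^2))"
    by (rule norm_h_lap_grid_wave_sum_sq_le[OF a N F far])
  also have "\<dots> \<le> (24 / pi^2 * 2 powr a * real N powr (2 - a))^2 * (Hp_semi a c)^2"
    by (rule mult_left_mono[OF weighted_sum]) simp
  finally show "(norm_h N (lap_h N (\<lambda>j1 j2. \<Sum>k\<in>F. d k * grid_wave N k j1 j2)))^2
      \<le> (24 / pi^2 * 2 powr a * real N powr (2 - a) * Hp_semi a c)^2"
    by (simp only: power_mult_distrib)
qed (intro mult_nonneg_nonneg Hp_semi_nonneg; simp)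

lemma has_sum_grid_vals_fourier_fun:
  assumes "(\<lambda>k. cmod (c k)) summable_on UNIV"
  shows "((\<lambda>k. c k * grid_wave N k j1 j2) has_sum grid_vals N (fourier_fun c) j1 j2) UNIV"
proof -
  have "(\<lambda>k. c k * grid_wave N k j1 j2) summable_on UNIV"
    by (rule abs_summable_summable, rule summable_on_comparison_test[OF assms])
      (simp_all add: norm_mult grid_wave_def)
  then show ?thesis
    unfolding grid_vals_fourier_fun by (rule has_sum_infsum)
qed

lemma has_sum_grid_vals_fourier_fun_diff:
  assumes "(\<lambda>k. cmod (c k)) summable_on UNIV" and "\<And>k. cmod (c' k) \<le> cmod (c k)"
  shows "((\<lambda>k. (c' k - c k) * grid_wave N k j1 j2)
      has_sum grid_vals N (fourier_fun c') j1 j2 - grid_vals N (fourier_fun c) j1 j2) UNIV"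
proof -
  have "(\<lambda>k. cmod (c' k)) summable_on UNIV"
    using assms(1) by (rule summable_on_comparison_test) (use assms(2) in auto)
  from has_sum_grid_vals_fourier_fun[OF this] has_sum_grid_vals_fourier_fun[OF assms(1)]
  show ?thesis
    unfolding has_sum_def left_diff_distrib sum_subtractf by (rule tendsto_diff)
qed

lemma proj_N_eq_of_low_freq:
  assumes "even N" "2 * max \<bar>fst k\<bar> \<bar>snd k\<bar> < int N"
  shows "proj_N (N - 2) c k = c k"
proof -
  have "2 * \<bar>fst k\<bar> \<le> int N - 2" "2 * \<bar>snd k\<bar> \<le> int N - 2" "N \<ge> 2"
    using assms by (auto elim!: evenE)
  then have "real_of_int (2 * \<bar>fst k\<bar>) \<le> real_of_int (int N - 2)"
    "real_of_int (2 * \<bar>snd k\<bar>) \<le> real_of_int (int N - 2)" "N \<ge> 2"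
    by (simp_all only: of_int_le_iff)
  then show ?thesis
    unfolding proj_N_def by (simp add: of_nat_diff)
qed

lemma norm_h_lap_le_of_has_sum:
  assumes sums: "\<And>j1 j2. ((\<lambda>k. f k j1 j2) has_sum U j1 j2) A"
    and bound: "\<And>F. finite F \<Longrightarrow> F \<subseteq> A \<Longrightarrow> norm_h N (lap_h N (\<lambda>j1 j2. \<Sum>k\<in>F. f k j1 j2)) \<le> B"
  shows "norm_h N (lap_h N U) \<le> B"
proof (rule tendsto_le[OF finite_subsets_at_top_neq_bot tendsto_const])
  have "((\<lambda>F. lap_h N (\<lambda>j1 j2. \<Sum>k\<in>F. f k j1 j2) j1 j2) \<longlongrightarrow> lap_h N U j1 j2) (finite_subsets_at_top A)" for j1 j2
    using sums unfolding has_sum_def lap_h_def divide_inverse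
    by (intro tendsto_mult_right tendsto_diff tendsto_add tendsto_mult_left)
  then show "((\<lambda>F. norm_h N (lap_h N (\<lambda>j1 j2. \<Sum>k\<in>F. f k j1 j2))) \<longlongrightarrow> norm_h N (lap_h N U)) (finite_subsets_at_top A)"
    unfolding norm_h_def by (intro tendsto_real_sqrt tendsto_mult_left tendsto_sum tendsto_power tendsto_norm)
  show "\<forall>\<^sub>F F in finite_subsets_at_top A. norm_h N (lap_h N (\<lambda>j1 j2. \<Sum>k\<in>F. f k j1 j2)) \<le> B"
    by (rule eventually_finite_subsets_at_top_weakI) (rule bound)
qed

theorem lemma4p6:
  fixes s :: real
  assumes "s > 1"
  shows "\<exists>C. \<forall>(N::nat) (c::int \<times> int \<Rightarrow> complex).
           N > 2 \<longrightarrow> even N \<longrightarrow> in_Hp (s + 2) c \<longrightarrow>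
           norm_h N (lap_h N (\<lambda>j1 j2. grid_vals N (fourier_fun (proj_N (N - 2) c)) j1 j2
                                      - grid_vals N (fourier_fun c) j1 j2))
             \<le> C * real N powr (- s) * Hp_semi (s + 2) c"
proof (intro exI allI impI)
  fix N :: nat and c :: "int \<times> int \<Rightarrow> complex"
  assume N: "N > 2" "even N" and c: "in_Hp (s + 2) c"
  define d where "d k = proj_N (N - 2) c k - c k" for k
  define A where "A = {k. int N \<le> 2 * max \<bar>fst k\<bar> \<bar>snd k\<bar>}"
  have proj_le: "cmod (proj_N (N - 2) c k) \<le> cmod (c k)" and d_le: "cmod (d k) \<le> cmod (c k)" for k
    by (simp_all add: proj_N_def d_def)
  have "((\<lambda>k. d k * grid_wave N k j1 j2)
      has_sum grid_vals N (fourier_fun (proj_N (N - 2) c)) j1 j2 - grid_vals N (fourier_fun c) j1 j2) UNIV" for j1 j2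
    unfolding d_def using c assms proj_le
    by (intro has_sum_grid_vals_fourier_fun_diff in_Hp_abs_summable) auto
  then have "((\<lambda>k. d k * grid_wave N k j1 j2)
      has_sum grid_vals N (fourier_fun (proj_N (N - 2) c)) j1 j2 - grid_vals N (fourier_fun c) j1 j2) A" for j1 j2
    by (rule has_sum_cong_neutral[THEN iffD1, rotated -1])
      (auto simp: A_def d_def proj_N_eq_of_low_freq[OF N(2)])
  moreover have "norm_h N (lap_h N (\<lambda>j1 j2. \<Sum>k\<in>F. d k * grid_wave N k j1 j2))
      \<le> 24 / pi^2 * 2 powr (s + 2) * real N powr (- s) * Hp_semi (s + 2) c" if "finite F" "F \<subseteq> A" for F
    using norm_h_lap_grid_wave_sum_le_Hp_semi[of "s + 2" N c F d] assms N c that d_le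
    by (auto simp: A_def)
  ultimately show "norm_h N (lap_h N (\<lambda>j1 j2. grid_vals N (fourier_fun (proj_N (N - 2) c)) j1 j2
      - grid_vals N (fourier_fun c) j1 j2)) \<le> 24 / pi^2 * 2 powr (s + 2) * real N powr (- s) * Hp_semi (s + 2) c"
    by (rule norm_h_lap_le_of_has_sum)
qed

end
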